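(* For all integers $n \ge 3$ and $0 \le m \le n-1$ we have $\widehat{C}_{n,m} > 1$.
   Context: $\mathcal{K}_k^n = \{\prod_{s=1}^n [\frac{i_s-1}{k}, \frac{i_s}{k}] : i_s \in \{1,\dots,k\}\}$ (cubes dividing $I^n=[0,1]^n$); $\dim$ is topological dimension; a set $S\subset I^n$ connects some opposite faces of $I^n$ if it is connected and meets both $\{z_i=0\}$ and $\{z_i=1\}$ for some $i$; $\mathbb{Z}^{n-1}$ has the $\ell^\infty$ norm; $P\subset\mathbb{Z}^{n-1}$ is $1$-connected if any two points are joined by a finite chain in $P$ with consecutive $\ell^\infty$-distances $\le 1$. $\widehat{C}_{n,m}$ is the least constant $C>0$ such that: for every $k\in\mathbb{N}$ and every $F\colon\mathcal{K}_k^n\to\mathbb{Z}^{n-1}$ with $\|F(K_1)-F(K_2)\|_\infty\le 1$ whenever $\dim(K_1\cap K_2)\ge m$, there exist a $1$-connected $P\subset\mathbb{Z}^{n-1}$ with $|P|\le C$ and $\mathcal{S}\subset F^{-1}[P]$ with $\bigcup\mathcal{S}$ connecting some opposite faces of $I^n$. *)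

theory Defs
  imports "HOL-Analysis.Analysis"
begin

text \<open>Ambient dimension n = CARD('n); points of I^n are vectors of type real^'n.
  Points of Z^(n-1) are functions nat => int vanishing from index n-1 on.\<close>

definition cube :: "nat \<Rightarrow> ('n::finite \<Rightarrow> nat) \<Rightarrow> (real^'n) set" where
  "cube k i = {z. \<forall>s. real (i s - 1) / real k \<le> z $ s \<and> z $ s \<le> real (i s) / real k}"

definition cubes :: "nat \<Rightarrow> (real^'n::finite) set set" where
  "cubes k = {cube k i | i. \<forall>s. 1 \<le> i s \<and> i s \<le> k}"

definition lattice_pts :: "nat \<Rightarrow> (nat \<Rightarrow> int) set" where
  "lattice_pts d = {p. \<forall>s\<ge>d. p s = 0}"

definition linf_norm :: "nat \<Rightarrow> (nat \<Rightarrow> int) \<Rightarrow> int" where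
  "linf_norm d p = (if d = 0 then 0 else Max ((\<lambda>s. \<bar>p s\<bar>) ` {..<d}))"

definition one_connected :: "nat \<Rightarrow> (nat \<Rightarrow> int) set \<Rightarrow> bool" where
  "one_connected d P \<longleftrightarrow> (\<forall>p\<in>P. \<forall>q\<in>P. \<exists>xs. xs \<noteq> [] \<and> hd xs = p \<and> last xs = q \<and>
      set xs \<subseteq> P \<and> (\<forall>j < length xs - 1. linf_norm d (\<lambda>s. (xs ! j) s - (xs ! Suc j) s) \<le> 1))"

definition connects_opposite_faces :: "(real^'n::finite) set \<Rightarrow> bool" where
  "connects_opposite_faces S \<longleftrightarrow> connected S \<and>
     (\<exists>i. (\<exists>z\<in>S. z $ i = 0) \<and> (\<exists>z\<in>S. z $ i = 1))"

text \<open>Topological dimension of K1 \<inter> K2: the intersection of two grid cubes is a convex set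
  (a common face or empty), whose topological dimension equals its affine dimension.\<close>

definition admissible_const :: "'n::finite itself \<Rightarrow> nat \<Rightarrow> real \<Rightarrow> bool" where
  "admissible_const _ m C \<longleftrightarrow> C > 0 \<and>
    (\<forall>k::nat. k \<ge> 1 \<longrightarrow> (\<forall>F :: (real^'n) set \<Rightarrow> (nat \<Rightarrow> int).
       (\<forall>K\<in>cubes k. F K \<in> lattice_pts (CARD('n) - 1)) \<longrightarrow>
       (\<forall>K1\<in>cubes k. \<forall>K2\<in>cubes k. aff_dim (K1 \<inter> K2) \<ge> int m \<longrightarrow>
            linf_norm (CARD('n) - 1) (\<lambda>s. F K1 s - F K2 s) \<le> 1) \<longrightarrow>
       (\<exists>P \<subseteq> lattice_pts (CARD('n) - 1). one_connected (CARD('n) - 1) P \<and> finite P \<and>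
          real (card P) \<le> C \<and>
          (\<exists>\<S> \<subseteq> {K \<in> cubes k. F K \<in> P}. connects_opposite_faces (\<Union>\<S>)))))"

definition C_hat :: "'n::finite itself \<Rightarrow> nat \<Rightarrow> ereal" where
  "C_hat n m = Inf {ereal C | C. admissible_const n m C}"

end

(*
  Subdivide I^n into 3^n cubes and label the cube with index vector i by a vector in {0,1}^(n-1):
  two coordinates carry a four-colouring of the 3 x 3 x 3 grid spanned by three chosen axes, and
  every further axis gets one coordinate recording whether the index along it is at least 2.
  Along each axis every cube is assigned the lower half {1,2} or the upper half {2,3} of the index
  range, containing its own index, such that touching cubes with equal labels are assigned the
  same half. A connected union of cubes with one label therefore stays in one half along every
  axis and cannot meet two opposite faces of I^n, so every admissible constant is at least 2.
  Since the labels lie in {0,1}^(n-1), the Lipschitz condition holds for every m.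
*)

theory Submission
  imports Defs
begin

lemma connected_closed_Union_constant:
  assumes "finite \<S>" and "\<And>K. K \<in> \<S> \<Longrightarrow> closed K" and "connected (\<Union>\<S>)"
    and touching: "\<And>K L. K \<in> \<S> \<Longrightarrow> L \<in> \<S> \<Longrightarrow> K \<inter> L \<noteq> {} \<Longrightarrow> f K = f L"
    and "K \<in> \<S>" "x \<in> K" "L \<in> \<S>" "y \<in> L"
  shows "f K = f L"
proof (rule ccontr)
  assume ne: "f K \<noteq> f L"
  define A where "A = \<Union>{M \<in> \<S>. f M = f K}"
  define B where "B = \<Union>{M \<in> \<S>. f M \<noteq> f K}"
  have "closed A" "closed B"
    using assms(1,2) by (auto simp: A_def B_def)
  moreover have "A \<inter> B \<inter> \<Union>\<S> = {}"
    using touching by (fastforce simp: A_def B_def)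
  moreover have "\<Union>\<S> \<subseteq> A \<union> B"
    by (auto simp: A_def B_def)
  ultimately have "A \<inter> \<Union>\<S> = {} \<or> B \<inter> \<Union>\<S> = {}"
    using connected_closedD[OF assms(3)] by blast
  moreover have "x \<in> A \<inter> \<Union>\<S>" "y \<in> B \<inter> \<Union>\<S>"
    using assms(5-8) ne by (auto simp: A_def B_def)
  ultimately show False
    by blast
qed

lemma linf_norm_le:
  assumes "0 \<le> c" and "\<And>s. s < d \<Longrightarrow> \<bar>p s\<bar> \<le> c"
  shows "linf_norm d p \<le> c"
proof (cases "d = 0")
  case False
  then have "{..<d} \<noteq> {}"
    by auto
  then show ?thesis
    using assms by (simp add: linf_norm_def Max_le_iff)
qed (simp add: linf_norm_def assms)

lemma closed_cube: "closed (cube k i :: (real^'n::finite) set)"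
proof -
  have "cube k i = (\<Inter>s. {z::real^'n. real (i s - 1) / k \<le> z $ s} \<inter> {z. z $ s \<le> real (i s) / k})"
    by (auto simp: cube_def)
  then show ?thesis
    by (simp add: closed_INT closed_Int closed_Collect_le continuous_on_component)
qed

lemma finite_cubes: "finite (cubes k :: (real^'n::finite) set set)"
proof -
  have "cubes k = (\<lambda>i. cube k i :: (real^'n) set) ` (UNIV \<rightarrow>\<^sub>E {1..k})"
    by (auto simp: cubes_def PiE_UNIV_domain Pi_def)
  then show ?thesis
    by (simp add: finite_PiE)
qed

definition cube_index :: "nat \<Rightarrow> (real^'n::finite) set \<Rightarrow> 'n \<Rightarrow> nat" where
  "cube_index k K = (SOME i. (\<forall>s. i s \<in> {1..k}) \<and> K = cube k i)"

lemma cube_index: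
  assumes "K \<in> cubes k"
  shows "cube_index k K s \<in> {1..k}" and "cube k (cube_index k K) = K"
proof -
  have "\<exists>i. (\<forall>s. i s \<in> {1..k}) \<and> K = cube k i"
    using assms by (auto simp: cubes_def)
  then have "(\<forall>s. cube_index k K s \<in> {1..k}) \<and> K = cube k (cube_index k K)"
    unfolding cube_index_def by (rule someI_ex)
  then show "cube_index k K s \<in> {1..k}" and "cube k (cube_index k K) = K"
    by simp_all
qed

lemma cube_index_pos:
  assumes "K \<in> cubes k"
  shows "0 < k"
  using cube_index(1)[OF assms] by fastforce

lemma cube_index_le_if_meet:
  assumes "K \<in> cubes k" and "L \<in> cubes k" and "x \<in> K" and "x \<in> L"
  shows "cube_index k K s \<le> Suc (cube_index k L s)"
proof -
  have "real (cube_index k K s - 1) / k \<le> x $ s" "x $ s \<le> real (cube_index k L s) / k"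
    using assms cube_index(2)[OF assms(1)] cube_index(2)[OF assms(2)] unfolding cube_def by blast+
  then have "real (cube_index k K s - 1) / k \<le> real (cube_index k L s) / k"
    by linarith
  then have "real (cube_index k K s - 1) \<le> real (cube_index k L s)"
    using cube_index_pos[OF assms(1)] by (simp add: divide_le_cancel)
  then show ?thesis
    by linarith
qed

lemma cube_index_zero_face:
  assumes "K \<in> cubes k" and "x \<in> K" and "x $ s = 0"
  shows "cube_index k K s = 1"
proof -
  have "real (cube_index k K s - 1) / k \<le> x $ s"
    using assms(2) cube_index(2)[OF assms(1)] unfolding cube_def by blast
  then have "real (cube_index k K s - 1) / k \<le> 0"
    using assms(3) by simp
  then have "cube_index k K s \<le> 1"
    using cube_index_pos[OF assms(1)] by (simp add: divide_le_0_iff)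
  then show ?thesis
    using cube_index(1)[OF assms(1), of s] by simp
qed

lemma cube_index_one_face:
  assumes "K \<in> cubes k" and "x \<in> K" and "x $ s = 1"
  shows "cube_index k K s = k"
proof -
  have "x $ s \<le> real (cube_index k K s) / k"
    using assms(2) cube_index(2)[OF assms(1)] unfolding cube_def by blast
  then have "1 \<le> real (cube_index k K s) / k"
    using assms(3) by simp
  then have "k \<le> cube_index k K s"
    using cube_index_pos[OF assms(1)] by (simp add: le_divide_eq)
  then show ?thesis
    using cube_index(1)[OF assms(1), of s] by simp
qed

(*
  The colour of a cell (x, y, z) of the 3 x 3 x 3 grid is the pair (upper_cell, far_cell); in an
  upper cell an index 2 belongs to the upper half {2,3}, in a lower cell to the lower half {1,2}.
  Among the cells with coordinate sum 6 exactly the odd permutations of (1,2,3) are upper: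
  otherwise the touching cells (3,2,1) and (2,3,1) would get the same colour but different halves.
*)
definition upper_cell :: "nat \<Rightarrow> nat \<Rightarrow> nat \<Rightarrow> bool" where
  "upper_cell x y z \<longleftrightarrow> 6 < x + y + z \<or> (x + y + z = 6 \<and> x mod 3 = Suc y mod 3)"

definition far_cell :: "nat \<Rightarrow> nat \<Rightarrow> nat \<Rightarrow> bool" where
  "far_cell x y z \<longleftrightarrow> (if upper_cell x y z then 1 \<in> {x, y, z} else 3 \<in> {x, y, z})"

definition upper_half :: "bool \<Rightarrow> nat \<Rightarrow> bool" where
  "upper_half u v \<longleftrightarrow> v = 3 \<or> (v = 2 \<and> u)"

lemma cell_upper_half_eq:
  fixes x y z x' y' z' :: nat
  assumes "{x, y, z, x', y', z'} \<subseteq> {1..3}"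
    and "x \<le> Suc x'" "x' \<le> Suc x" "y \<le> Suc y'" "y' \<le> Suc y" "z \<le> Suc z'" "z' \<le> Suc z"
    and "upper_cell x y z = upper_cell x' y' z'" and "far_cell x y z = far_cell x' y' z'"
  shows "upper_half (upper_cell x y z) x = upper_half (upper_cell x' y' z') x'
    \<and> upper_half (upper_cell x y z) y = upper_half (upper_cell x' y' z') y'
    \<and> upper_half (upper_cell x y z) z = upper_half (upper_cell x' y' z') z'"
proof -
  have check: "\<forall>x\<in>set [1,2,3]. \<forall>y\<in>set [1,2,3]. \<forall>z\<in>set [1,2,3].
      \<forall>x'\<in>set [1,2,3]. \<forall>y'\<in>set [1,2,3]. \<forall>z'\<in>set [1,2,3::nat].
    x \<le> Suc x' \<and> x' \<le> Suc x \<and> y \<le> Suc y' \<and> y' \<le> Suc y \<and> z \<le> Suc z' \<and> z' \<le> Suc z \<and>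
    upper_cell x y z = upper_cell x' y' z' \<and> far_cell x y z = far_cell x' y' z' \<longrightarrow>
    upper_half (upper_cell x y z) x = upper_half (upper_cell x' y' z') x'
    \<and> upper_half (upper_cell x y z) y = upper_half (upper_cell x' y' z') y'
    \<and> upper_half (upper_cell x y z) z = upper_half (upper_cell x' y' z') z'"
    by code_simp
  have mem: "x \<in> set [1,2,3]" "y \<in> set [1,2,3]" "z \<in> set [1,2,3]"
    "x' \<in> set [1,2,3]" "y' \<in> set [1,2,3]" "z' \<in> set [1,2,3]"
    using assms(1) by auto
  show ?thesis
    by (rule check[rule_format, OF mem]) (use assms in auto)
qed

definition gadget_upper :: "('n \<Rightarrow> nat) \<Rightarrow> ('n \<Rightarrow> nat) \<Rightarrow> bool" where
  "gadget_upper e i \<longleftrightarrow> upper_cell (i (inv e 0)) (i (inv e 1)) (i (inv e 2))"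

definition gadget_far :: "('n \<Rightarrow> nat) \<Rightarrow> ('n \<Rightarrow> nat) \<Rightarrow> bool" where
  "gadget_far e i \<longleftrightarrow> far_cell (i (inv e 0)) (i (inv e 1)) (i (inv e 2))"

definition grid_label :: "('n::finite \<Rightarrow> nat) \<Rightarrow> ('n \<Rightarrow> nat) \<Rightarrow> nat \<Rightarrow> int" where
  "grid_label e i j =
    (if j = 0 then of_bool (gadget_upper e i)
     else if j = 1 then of_bool (gadget_far e i)
     else if j < CARD('n) - 1 then of_bool (2 \<le> i (inv e (Suc j)))
     else 0)"

definition grid_half :: "('n \<Rightarrow> nat) \<Rightarrow> ('n \<Rightarrow> nat) \<Rightarrow> 'n \<Rightarrow> bool" where
  "grid_half e i t \<longleftrightarrow> (if e t < 3 then upper_half (gadget_upper e i) (i t) else 2 \<le> i t)"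

lemma grid_label_in_lattice_pts:
  "3 \<le> CARD('n::finite) \<Longrightarrow> grid_label (e :: 'n \<Rightarrow> nat) i \<in> lattice_pts (CARD('n) - 1)"
  by (auto simp: lattice_pts_def grid_label_def)

lemma linf_norm_grid_label_diff:
  "linf_norm d (\<lambda>s. grid_label e i s - grid_label e j s) \<le> 1"
proof (rule linf_norm_le)
  fix s
  have "grid_label e i s \<in> {0, 1}" "grid_label e j s \<in> {0, 1}"
    by (simp_all add: grid_label_def)
  then show "\<bar>grid_label e i s - grid_label e j s\<bar> \<le> 1"
    by auto
qed simp

lemma grid_half_one: "i t = 1 \<Longrightarrow> \<not> grid_half e i t"
  by (simp add: grid_half_def upper_half_def)

lemma grid_half_three: "i t = 3 \<Longrightarrow> grid_half e i t"
  by (simp add: grid_half_def upper_half_def)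

lemma grid_half_eq_if_touching:
  fixes e :: "'n::finite \<Rightarrow> nat" and i j :: "'n \<Rightarrow> nat"
  assumes e: "bij_betw e UNIV {..<CARD('n)}"
    and range: "\<And>s. i s \<in> {1..3}" "\<And>s. j s \<in> {1..3}"
    and touching: "\<And>s. i s \<le> Suc (j s)" "\<And>s. j s \<le> Suc (i s)"
    and same_label: "grid_label e i = grid_label e j"
  shows "grid_half e i t = grid_half e j t"
proof (cases "e t < 3")
  case True
  have "gadget_upper e i = gadget_upper e j" "gadget_far e i = gadget_far e j"
    using fun_cong[OF same_label, of 0] fun_cong[OF same_label, of 1]
    by (simp_all add: grid_label_def of_bool_eq_iff)
  then have "upper_half (gadget_upper e i) (i (inv e q)) = upper_half (gadget_upper e j) (j (inv e q))"
    if "q \<in> {0, 1, 2}" for q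
    using cell_upper_half_eq[of "i (inv e 0)" "i (inv e 1)" "i (inv e 2)"
        "j (inv e 0)" "j (inv e 1)" "j (inv e 2)"] range touching that unfolding gadget_upper_def gadget_far_def by auto
  moreover have "e t \<in> {0, 1, 2}"
    using True by auto
  ultimately have
    "upper_half (gadget_upper e i) (i (inv e (e t))) = upper_half (gadget_upper e j) (j (inv e (e t)))"
    by blast
  moreover have "inv e (e t) = t"
    using e by (simp add: bij_betw_def)
  ultimately show ?thesis
    using True by (simp add: grid_half_def)
next
  case False
  define l where "l = e t - 1"
  have "e t < CARD('n)" "inv e (e t) = t"
    using e by (auto simp: bij_betw_def)
  then have "l \<noteq> 0" "l \<noteq> 1" "l < CARD('n) - 1" "inv e (Suc l) = t"
    using False by (auto simp: l_def)
  moreover have "grid_label e i l = grid_label e j l"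
    using same_label by simp
  ultimately have "(2 \<le> i t) = (2 \<le> j t)"
    by (simp add: grid_label_def of_bool_eq_iff)
  then show ?thesis
    using False by (simp add: grid_half_def)
qed

lemma grid_label_level_set_not_crossing:
  fixes e :: "'n::finite \<Rightarrow> nat"
  assumes e: "bij_betw e UNIV {..<CARD('n)}"
    and \<S>: "\<S> \<subseteq> {K \<in> cubes 3. grid_label e (cube_index 3 K) = p}"
  shows "\<not> connects_opposite_faces (\<Union>\<S>)"
proof
  assume "connects_opposite_faces (\<Union>\<S>)"
  then obtain a z w K L where conn: "connected (\<Union>\<S>)"
    and K: "K \<in> \<S>" "z \<in> K" "z $ a = 0" and L: "L \<in> \<S>" "w \<in> L" "w $ a = 1"
    unfolding connects_opposite_faces_def by blast
  have cubes: "M \<in> cubes 3" if "M \<in> \<S>" for M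
    using \<S> that by blast
  have "grid_half e (cube_index 3 K) a = grid_half e (cube_index 3 L) a"
  proof (rule connected_closed_Union_constant[where f = "\<lambda>M. grid_half e (cube_index 3 M) a"])
    show "finite \<S>"
      using \<S> by (blast intro: finite_subset[OF _ finite_cubes])
    show "closed M" if "M \<in> \<S>" for M
      using closed_cube[of 3 "cube_index 3 M"] cube_index(2)[OF cubes[OF that]] by simp
    show "grid_half e (cube_index 3 M) a = grid_half e (cube_index 3 M') a"
      if M: "M \<in> \<S>" and M': "M' \<in> \<S>" and meet: "M \<inter> M' \<noteq> {}" for M M'
    proof (rule grid_half_eq_if_touching[OF e])
      obtain x where "x \<in> M" "x \<in> M'"
        using meet by blast
      then show "cube_index 3 M s \<le> Suc (cube_index 3 M' s)"
        and "cube_index 3 M' s \<le> Suc (cube_index 3 M s)" for s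
        using cube_index_le_if_meet cubes[OF M] cubes[OF M'] by blast+
      show "cube_index 3 M s \<in> {1..3}" "cube_index 3 M' s \<in> {1..3}" for s
        using cube_index(1) cubes[OF M] cubes[OF M'] by blast+
      show "grid_label e (cube_index 3 M) = grid_label e (cube_index 3 M')"
        using \<S> M M' by auto
    qed
  qed (fact conn K L)+
  moreover have "cube_index 3 K a = 1"
    using cube_index_zero_face cubes K by blast
  moreover have "cube_index 3 L a = 3"
    using cube_index_one_face cubes L by blast
  ultimately show False
    using grid_half_one grid_half_three by metis
qed

lemma admissible_const_ge_two:
  assumes "3 \<le> CARD('n::finite)" and "admissible_const TYPE('n) m C"
  shows "2 \<le> C"
proof -
  obtain e :: "'n \<Rightarrow> nat" where e: "bij_betw e UNIV {..<CARD('n)}"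
    using ex_bij_betw_finite_nat[of "UNIV :: 'n set"] by (auto simp: atLeast0LessThan)
  define F where "F K = grid_label e (cube_index 3 K)" for K :: "(real^'n) set"
  have "\<exists>P \<subseteq> lattice_pts (CARD('n) - 1). one_connected (CARD('n) - 1) P \<and> finite P \<and>
          real (card P) \<le> C \<and> (\<exists>\<S> \<subseteq> {K \<in> cubes 3. F K \<in> P}. connects_opposite_faces (\<Union>\<S>))"
    using assms(2)[unfolded admissible_const_def, THEN conjunct2, rule_format, where k = 3 and F = F]
    by (simp add: F_def grid_label_in_lattice_pts[OF assms(1)] linf_norm_grid_label_diff
        del: One_nat_def)
  then obtain P \<S> where "finite P" "real (card P) \<le> C"
    and \<S>: "\<S> \<subseteq> {K \<in> cubes 3. F K \<in> P}" and crossing: "connects_opposite_faces (\<Union>\<S>)"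
    by blast
  show "2 \<le> C"
  proof (rule ccontr)
    assume "\<not> 2 \<le> C"
    with \<open>finite P\<close> \<open>real (card P) \<le> C\<close> have single: "p = q" if "p \<in> P" "q \<in> P" for p q
      using that card_le_Suc0_iff_eq by fastforce
    obtain K0 where "K0 \<in> \<S>"
      using crossing unfolding connects_opposite_faces_def by blast
    then have "\<S> \<subseteq> {K \<in> cubes 3. grid_label e (cube_index 3 K) = F K0}"
      using \<S> single unfolding F_def by blast
    then show False
      using grid_label_level_set_not_crossing[OF e] crossing by blast
  qed
qed

theorem proposition5p3:
  assumes "CARD('n::finite) \<ge> 3" and "m \<le> CARD('n) - 1"
  shows "C_hat TYPE('n) m > 1"
proof -
  have "ereal 2 \<le> C_hat TYPE('n) m"
    unfolding C_hat_def using admissible_const_ge_two[OF assms(1)] by (auto intro: Inf_greatest)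
  then show ?thesis
    by (rule order.strict_trans2[rotated]) (simp add: one_ereal_def)
qed

end
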